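(* Let $\mathfrak g$ be a $(2n+2)$-dimensional real almost abelian Lie algebra ($n\ge 1$), let $(J,\langle\cdot,\cdot\rangle)$ be a Hermitian structure on $\mathfrak g$, and let $\mathfrak g'=[\mathfrak g,\mathfrak g]$. (i) If $\dim\mathfrak g'=1$, then $(J,\langle\cdot,\cdot\rangle)$ is LCK if and only if $\dim\mathfrak g=4$ and there is an orthonormal basis $\{f_1,f_2,u,v\}$ of $\mathfrak g$ with $Jf_1=f_2$, $Ju=v$, such that the only nonzero bracket (up to antisymmetry) is $[f_1,f_2]=\mu f_2+mu+nv$ for some $\mu,m,n\in\mathbb R$ with $(m,n)\neq(0,0)$; in this case $\mathfrak g$ is isomorphic to $\mathfrak h_3\times\mathbb R$ (if $\mu=0$) or to $\mathfrak{aff}(\mathbb R)\times\mathbb R^2$ (if $\mu\neq 0$). (ii) If $\dim\mathfrak g'\ge 2$, then $(J,\langle\cdot,\cdot\rangle)$ is LCK if and only if $\mathfrak g$ decomposes as a $J$-invariant orthogonal sum $\mathfrak g=\mathfrak a^{\perp}\ltimes\mathfrak a$ with $\mathfrak a$ an abelian ideal of codimension $2$, and there is an orthonormal basis $\{f_1,f_2\}$ of $\mathfrak a^\perp$ such that $[f_1,f_2]=\mu f_2$, $f_2=Jf_1$, $\operatorname{ad}_{f_2}|_{\mathfrak a}=0$ and $\operatorname{ad}_{f_1}|_{\mathfrak a}=\lambda\,\mathrm{Id}+B$ for some $\mu,\lambda\in\mathbb R$ with $\lambda\neq0$ and some $B\in\mathfrak u(n)$. In this case the Lee form is $\theta=-2\lambda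 f^1$, and $\mathfrak g$ is unimodular if and only if $\lambda=-\frac{\mu}{2n}$.
   Context: An almost abelian Lie algebra is a real Lie algebra with an abelian ideal of codimension one. A Hermitian structure $(J,\langle\cdot,\cdot\rangle)$ on $\mathfrak g$ is a complex structure $J$ ($J^2=-\mathrm{Id}$, vanishing Nijenhuis tensor $N_J(x,y)=[Jx,Jy]-[x,y]-J([Jx,y]+[x,Jy])$) with a $J$-compatible inner product; its fundamental form is $\omega(x,y)=\langle Jx,y\rangle$. The structure is LCK (locally conformal Kähler) if there is a closed $\theta\in\mathfrak g^*$, $\theta\neq 0$ (the Lee form), with $d\omega=\theta\wedge\omega$, where $d$ is the Chevalley–Eilenberg differential. Here $\mathfrak u(n)$ denotes the endomorphisms $B$ of $\mathfrak a$ that are skew-symmetric with respect to $\langle\cdot,\cdot\rangle$ and commute with $J|_{\mathfrak a}$; $f^1$ is the metric dual of $f_1$. $\mathfrak h_3$ is the 3-dimensional Heisenberg Lie algebra and $\mathfrak{aff}(\mathbb R)$ the non-abelian 2-dimensional Lie algebra. A Lie algebra is unimodular if $\operatorname{tr}\operatorname{ad}_x=0$ for all $x$. *)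

theory Defs
  imports "HOL-Analysis.Analysis"
begin

text \<open>The inner product of the Hermitian structure is the inner product of the type
(no loss of generality: the bracket is arbitrary).\<close>

definition lie_algebra :: "('g::real_vector \<Rightarrow> 'g \<Rightarrow> 'g) \<Rightarrow> bool" where
  "lie_algebra br \<longleftrightarrow> bilinear br \<and> (\<forall>x. br x x = 0) \<and>
     (\<forall>x y z. br x (br y z) + br y (br z x) + br z (br x y) = 0)"

definition almost_abelian :: "('g::euclidean_space \<Rightarrow> 'g \<Rightarrow> 'g) \<Rightarrow> bool" where
  "almost_abelian br \<longleftrightarrow> (\<exists>a. subspace a \<and> dim a + 1 = DIM('g) \<and>
     (\<forall>x\<in>a. \<forall>y. br y x \<in> a) \<and> (\<forall>x\<in>a. \<forall>y\<in>a. br x y = 0))"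

definition derived :: "('g::real_vector \<Rightarrow> 'g \<Rightarrow> 'g) \<Rightarrow> 'g set" where
  "derived br = span {br x y | x y. True}"

definition nijenhuis :: "('g::real_vector \<Rightarrow> 'g \<Rightarrow> 'g) \<Rightarrow> ('g \<Rightarrow> 'g) \<Rightarrow> 'g \<Rightarrow> 'g \<Rightarrow> 'g" where
  "nijenhuis br J x y = br (J x) (J y) - br x y - J (br (J x) y + br x (J y))"

definition hermitian :: "('g::real_inner \<Rightarrow> 'g \<Rightarrow> 'g) \<Rightarrow> ('g \<Rightarrow> 'g) \<Rightarrow> bool" where
  "hermitian br J \<longleftrightarrow> linear J \<and> (\<forall>x. J (J x) = - x) \<and>
     (\<forall>x y. nijenhuis br J x y = 0) \<and> (\<forall>x y. inner (J x) (J y) = inner x y)"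

definition fundamental_form :: "('g::real_inner \<Rightarrow> 'g) \<Rightarrow> 'g \<Rightarrow> 'g \<Rightarrow> real" where
  "fundamental_form J x y = inner (J x) y"

definition ce_d1 :: "('g \<Rightarrow> 'g \<Rightarrow> 'g) \<Rightarrow> ('g \<Rightarrow> real) \<Rightarrow> 'g \<Rightarrow> 'g \<Rightarrow> real" where
  "ce_d1 br \<alpha> x y = - \<alpha> (br x y)"

definition ce_d2 :: "('g \<Rightarrow> 'g \<Rightarrow> 'g) \<Rightarrow> ('g \<Rightarrow> 'g \<Rightarrow> real) \<Rightarrow> 'g \<Rightarrow> 'g \<Rightarrow> 'g \<Rightarrow> real" where
  "ce_d2 br \<omega> x y z = - \<omega> (br x y) z - \<omega> (br y z) x - \<omega> (br z x) y"

definition wedge12 :: "('g \<Rightarrow> real) \<Rightarrow> ('g \<Rightarrow> 'g \<Rightarrow> real) \<Rightarrow> 'g \<Rightarrow> 'g \<Rightarrow> 'g \<Rightarrow> real" where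
  "wedge12 \<theta> \<omega> x y z = \<theta> x * \<omega> y z - \<theta> y * \<omega> x z + \<theta> z * \<omega> x y"

definition lee_form :: "('g::real_inner \<Rightarrow> 'g \<Rightarrow> 'g) \<Rightarrow> ('g \<Rightarrow> 'g) \<Rightarrow> ('g \<Rightarrow> real) \<Rightarrow> bool" where
  "lee_form br J \<theta> \<longleftrightarrow> linear \<theta> \<and> \<theta> \<noteq> (\<lambda>_. 0) \<and> (\<forall>x y. ce_d1 br \<theta> x y = 0) \<and>
     (\<forall>x y z. ce_d2 br (fundamental_form J) x y z = wedge12 \<theta> (fundamental_form J) x y z)"

definition LCK :: "('g::real_inner \<Rightarrow> 'g \<Rightarrow> 'g) \<Rightarrow> ('g \<Rightarrow> 'g) \<Rightarrow> bool" where
  "LCK br J \<longleftrightarrow> (\<exists>\<theta>. lee_form br J \<theta>)"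

definition ltrace :: "('g::euclidean_space \<Rightarrow> 'g) \<Rightarrow> real" where
  "ltrace f = (\<Sum>b\<in>Basis. inner (f b) b)"

definition unimodular :: "('g::euclidean_space \<Rightarrow> 'g \<Rightarrow> 'g) \<Rightarrow> bool" where
  "unimodular br \<longleftrightarrow> (\<forall>x. ltrace (br x) = 0)"

definition lie_isomorphic :: "('a::real_vector \<Rightarrow> 'a \<Rightarrow> 'a) \<Rightarrow> ('b::real_vector \<Rightarrow> 'b \<Rightarrow> 'b) \<Rightarrow> bool" where
  "lie_isomorphic br br' \<longleftrightarrow> (\<exists>\<phi>. linear \<phi> \<and> bij \<phi> \<and> (\<forall>x y. \<phi> (br x y) = br' (\<phi> x) (\<phi> y)))"

text \<open>h_3 x R on R^4: basis e1..e4, only nonzero bracket [e1,e2] = e3.\<close>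
definition h3_times_R :: "real \<times> real \<times> real \<times> real \<Rightarrow> real \<times> real \<times> real \<times> real \<Rightarrow> real \<times> real \<times> real \<times> real" where
  "h3_times_R = (\<lambda>(a1,b1,c1,d1) (a2,b2,c2,d2). (0, 0, a1*b2 - b1*a2, 0))"

text \<open>aff(R) x R^2 on R^4: basis e1..e4, only nonzero bracket [e1,e2] = e2.\<close>
definition aff_times_R2 :: "real \<times> real \<times> real \<times> real \<Rightarrow> real \<times> real \<times> real \<times> real \<Rightarrow> real \<times> real \<times> real \<times> real" where
  "aff_times_R2 = (\<lambda>(a1,b1,c1,d1) (a2,b2,c2,d2). (0, a1*b2 - b1*a2, 0, 0))"

end

theory Submission
  imports Defs
begin

text \<open>Let \<open>f\<^sub>1\<close> be a unit normal to the abelian ideal of codimension one, \<open>f\<^sub>2 = J f\<^sub>1\<close>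
and \<open>\<aa> = {f\<^sub>1, f\<^sub>2}\<^sup>\<bottom>\<close>.  Integrability of \<open>J\<close> makes \<open>A = ad f\<^sub>1\<close> preserve \<open>\<aa>\<close> and
commute with \<open>J\<close> there, and the whole bracket is determined by \<open>A|\<^sub>\<aa>\<close> and \<open>[f\<^sub>1, f\<^sub>2]\<close>.
Evaluating \<open>d\<omega> = \<theta> \<and> \<omega>\<close> on suitable triples gives \<open>\<theta>(f\<^sub>2) = 0\<close>,
\<open>\<theta>|\<^sub>\<aa> = - \<langle>J[f\<^sub>1, f\<^sub>2], \<cdot>\<rangle>\<close> and \<open>\<langle>A y, y\<rangle> = - \<theta>(f\<^sub>1)/2 \<cdot> |y|\<^sup>2\<close> on \<open>\<aa>\<close>.

If \<open>\<theta>(f\<^sub>1) \<noteq> 0\<close>, closedness of \<open>\<theta>\<close> kills the \<open>\<aa>\<close>-component of \<open>[f\<^sub>1, f\<^sub>2]\<close>, \<open>A|\<^sub>\<aa>\<close> is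
conformal with factor \<open>\<lambda> = - \<theta>(f\<^sub>1)/2\<close>, and \<open>[f\<^sub>1, y]\<close>, \<open>[f\<^sub>1, J y]\<close> span a plane in
\<open>\<gg>'\<close>.  If \<open>\<theta>(f\<^sub>1) = 0\<close>, then \<open>\<theta>\<close> lives on \<open>\<aa>\<close> and vanishes at every \<open>x \<in> \<aa>\<close>
that is orthogonal, together with \<open>J x\<close>, to some nonzero \<open>y \<in> \<aa>\<close>; as \<open>\<theta> \<noteq> 0\<close> this
forces \<open>dim \<aa> = 2\<close>, then \<open>A|\<^sub>\<aa> = 0\<close> and \<open>\<gg>' = \<real> [f\<^sub>1, f\<^sub>2]\<close>.  Conversely, both
normal forms satisfy \<open>d\<omega> = \<theta> \<and> \<omega>\<close> by direct computation.\<close>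

lemma orthonormal_pair_span_coords:
  fixes p q z :: "'a::real_inner"
  assumes "inner p p = 1" "inner q q = 1" "inner p q = 0" "z \<in> span {p, q}"
  shows "z = inner p z *\<^sub>R p + inner q z *\<^sub>R q"
proof -
  let ?r = "z - (inner p z *\<^sub>R p + inner q z *\<^sub>R q)"
  have "inner y ?r = 0" if "y \<in> {p, q}" for y
    using that assms(1-3) by (auto simp: inner_diff_right inner_add_right inner_commute[of q p])
  then have "orthogonal ?r y" if "y \<in> {p, q}" for y
    using that by (simp add: orthogonal_def inner_commute)
  moreover have "?r \<in> span {p, q}"
    by (intro span_diff assms(4) span_add span_scale span_base) auto
  ultimately have "orthogonal ?r ?r"
    by (intro orthogonal_to_span[of ?r "{p, q}"]) auto
  then show ?thesis by (simp add: orthogonal_def)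
qed

lemma subspace_exists_orthogonal_to_pair:
  fixes a :: "'a::euclidean_space set"
  assumes "subspace a" "x \<in> a" "w \<in> a" "dim a \<ge> 3"
  shows "\<exists>y\<in>a. y \<noteq> 0 \<and> inner x y = 0 \<and> inner w y = 0"
proof -
  let ?S = "{y \<in> a. \<forall>z\<in>span {x, w}. orthogonal z y}"
  have "span {x, w} \<subseteq> a" using assms by (intro span_minimal) auto
  then have "dim ?S + dim (span {x, w}) = dim a"
    using dim_subspace_orthogonal_to_vectors[OF subspace_span assms(1)] by blast
  moreover have "dim (span {x, w}) \<le> 2"
    using dim_le_card[of "{x, w}" "{x, w}"] by (cases "x = w") (auto simp: span_base)
  ultimately have "\<not> ?S \<subseteq> {0}" using assms(4) by (auto simp flip: dim_eq_0)
  then obtain y where "y \<in> ?S" "y \<noteq> 0" by blast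
  then show ?thesis by (auto simp: orthogonal_def span_base)
qed

lemma dim_2_orthogonal_expansion:
  fixes a :: "'a::euclidean_space set"
  assumes "subspace a" "dim a = 2" "v \<in> a" "w \<in> a" "v \<noteq> 0" "w \<noteq> 0" "inner v w = 0"
    and "x \<in> a"
  shows "x = (inner x v / inner v v) *\<^sub>R v + (inner x w / inner w w) *\<^sub>R w"
proof -
  have "independent {v, w}"
    using assms(5-7)
    by (intro pairwise_orthogonal_independent) (auto simp: pairwise_def orthogonal_def inner_commute)
  moreover have "v \<noteq> w" using assms(5,7) by auto
  ultimately have "dim {v, w} = 2" by (simp add: dim_eq_card_independent)
  then have "span {v, w} = a"
    using assms(1-4) by (intro subspace_dim_equal) (auto simp: span_minimal)
  then obtain s t where "x - s *\<^sub>R v = t *\<^sub>R w"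
    using assms(8) by (auto simp: span_breakdown_eq span_singleton)
  then have "x = s *\<^sub>R v + t *\<^sub>R w" by (simp add: algebra_simps)
  then show ?thesis
    using assms(5-7) by (simp add: inner_add_left inner_commute[of w v])
qed

locale lie_hermitian =
  fixes br :: "'g::euclidean_space \<Rightarrow> 'g \<Rightarrow> 'g" and J :: "'g \<Rightarrow> 'g"
  assumes lie: "lie_algebra br" and herm: "hermitian br J"
begin

lemma J_linear: "linear J"
  using herm unfolding hermitian_def by blast

lemma J_J [simp]: "J (J x) = - x"
  using herm unfolding hermitian_def by blast

lemma inner_J_J [simp]: "inner (J x) (J y) = inner x y"
  using herm unfolding hermitian_def by blast

lemma inner_J_left: "inner (J x) y = - inner x (J y)"
  using inner_J_J[of x "J y"] by simp

lemma inner_J_self [simp]: "inner (J x) x = 0" "inner x (J x) = 0"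
  using inner_J_left[of x x] by (simp_all add: inner_commute)

lemma J_simps [simp]: "J (x + y) = J x + J y" "J (c *\<^sub>R x) = c *\<^sub>R J x"
  "J (x - y) = J x - J y" "J (- x) = - J x" "J 0 = 0"
  using J_linear by (simp_all add: linear_add linear_cmul linear_diff linear_neg linear_0)

lemma bracket_simps [simp]:
  "br (x + y) z = br x z + br y z" "br z (x + y) = br z x + br z y"
  "br (x - y) z = br x z - br y z" "br z (x - y) = br z x - br z y"
  "br (c *\<^sub>R x) z = c *\<^sub>R br x z" "br z (c *\<^sub>R x) = c *\<^sub>R br z x"
  "br (- x) z = - br x z" "br z (- x) = - br z x" "br 0 z = 0" "br z 0 = 0"
  "br x x = 0"
  using lie unfolding lie_algebra_def
  by (auto simp: bilinear_ladd bilinear_radd bilinear_lsub bilinear_rsub bilinear_lmul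
    bilinear_rmul bilinear_lneg bilinear_rneg bilinear_lzero bilinear_rzero)

lemma bracket_antisym: "br y x = - br x y"
proof -
  have "br (x + y) (x + y) = br x x + br x y + (br y x + br y y)"
    by (simp only: bracket_simps(1,2) add_ac)
  then show ?thesis by (simp add: eq_neg_iff_add_eq_0 add.commute)
qed

lemma nijenhuis_zero: "br (J x) (J y) - br x y - J (br (J x) y + br x (J y)) = 0"
  using herm unfolding hermitian_def nijenhuis_def by blast

lemma bracket_in_derived: "br x y \<in> derived br"
  unfolding derived_def by (rule span_base) blast

lemma lee_formD:
  assumes "lee_form br J \<theta>"
  shows "linear \<theta>" "\<theta> (br x y) = 0"
    and "- inner (J (br x y)) z - inner (J (br y z)) x - inner (J (br z x)) y
       = \<theta> x * inner (J y) z - \<theta> y * inner (J x) z + \<theta> z * inner (J x) y"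
  using assms unfolding lee_form_def ce_d1_def ce_d2_def wedge12_def fundamental_form_def
  by auto

end

section \<open>Adapted frames\<close>

text \<open>A unit normal \<open>f\<^sub>1\<close> to an abelian ideal \<open>\<real> f\<^sub>2 \<oplus> a\<close> with \<open>f\<^sub>2 = J f\<^sub>1\<close>; the last two
assumptions say that \<open>ad f\<^sub>1\<close> preserves that ideal.\<close>

locale adapted_frame = lie_hermitian br J for br :: "'g::euclidean_space \<Rightarrow> 'g \<Rightarrow> 'g" and J +
  fixes f1 f2 :: 'g and a :: "'g set"
  assumes subspace_a: "subspace a" and norm_f1: "norm f1 = 1" and J_f1: "J f1 = f2"
    and f1_orth_a: "\<And>y. y \<in> a \<Longrightarrow> inner f1 y = 0"
    and f2_orth_a: "\<And>y. y \<in> a \<Longrightarrow> inner f2 y = 0"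
    and J_a: "\<And>y. y \<in> a \<Longrightarrow> J y \<in> a"
    and complement_in_a: "\<And>x. x - inner f1 x *\<^sub>R f1 - inner f2 x *\<^sub>R f2 \<in> a"
    and a_abelian: "\<And>x y. x \<in> a \<Longrightarrow> y \<in> a \<Longrightarrow> br x y = 0"
    and ad_f2_a: "\<And>x. x \<in> a \<Longrightarrow> br f2 x = 0"
    and ad_f1_a_f1_component: "\<And>x. x \<in> a \<Longrightarrow> inner f1 (br f1 x) = 0"
    and bracket_f12_f1_component: "inner f1 (br f1 f2) = 0"
begin

lemma inner_frame [simp]: "inner f1 f1 = 1" "inner f2 f2 = 1" "inner f1 f2 = 0" "inner f2 f1 = 0"
  using norm_f1 J_f1 by (auto simp: norm_eq_1 inner_commute dest: sym)

lemma J_f2 [simp]: "J f2 = - f1"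
  using J_f1 by (metis J_J)

lemma inner_frame_J [simp]: "inner f2 (J y) = inner f1 y" "inner f1 (J y) = - inner f2 y"
  using inner_J_J[of f1 y] inner_J_left[of f1 y] J_f1 by simp_all

lemma orth_a [simp]: "y \<in> a \<Longrightarrow> inner y f1 = 0" "y \<in> a \<Longrightarrow> inner f1 y = 0"
  "y \<in> a \<Longrightarrow> inner y f2 = 0" "y \<in> a \<Longrightarrow> inner f2 y = 0"
  using f1_orth_a f2_orth_a by (metis inner_commute)+

definition a_part :: "'g \<Rightarrow> 'g" where
  "a_part x = x - inner f1 x *\<^sub>R f1 - inner f2 x *\<^sub>R f2"

lemma a_part_in_a [simp]: "a_part x \<in> a"
  unfolding a_part_def by (rule complement_in_a)

lemma a_part_decomp: "x = inner f1 x *\<^sub>R f1 + inner f2 x *\<^sub>R f2 + a_part x"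
  unfolding a_part_def by simp

lemma a_part_id: "x \<in> a \<Longrightarrow> a_part x = x"
  unfolding a_part_def by simp

lemma inner_a_part: "w \<in> a \<Longrightarrow> inner w z = inner w (a_part z)"
  by (subst (1) a_part_decomp[of z]) (simp add: inner_add_right)

lemma a_nonzero:
  assumes "dim a \<ge> 1"
  obtains y where "y \<in> a" "y \<noteq> 0"
  using assms by (metis dim_eq_0 not_one_le_zero subsetI singletonI subset_singletonD)

lemma bracket_expansion:
  "br x y = (inner f1 x * inner f2 y - inner f2 x * inner f1 y) *\<^sub>R br f1 f2
     + inner f1 x *\<^sub>R br f1 (a_part y) - inner f1 y *\<^sub>R br f1 (a_part x)"
proof -
  have "br (a_part x) f2 = 0" using bracket_antisym[of f2 "a_part x"] ad_f2_a[OF a_part_in_a] by simp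
  moreover have "br f2 f1 = - br f1 f2" "br (a_part x) f1 = - br f1 (a_part x)"
    by (rule bracket_antisym)+
  ultimately show ?thesis
    by (subst (1) a_part_decomp[of x], subst (1) a_part_decomp[of y])
      (simp add: ad_f2_a a_abelian algebra_simps)
qed

lemma ad_f1_J:
  assumes "x \<in> a"
  shows "br f1 (J x) = J (br f1 x)"
proof -
  have "br f2 (J x) - br f1 x - J (br f2 x + br f1 (J x)) = 0"
    using nijenhuis_zero[of f1 x] J_f1 by simp
  then have "J (br f1 (J x)) = - br f1 x" using ad_f2_a assms J_a by simp
  then have "J (J (br f1 (J x))) = J (- br f1 x)" by (rule arg_cong)
  then show ?thesis by simp
qed

lemma ad_f1_in_a:
  assumes "x \<in> a"
  shows "br f1 x \<in> a"
proof -
  have "br f1 x = - J (br f1 (J x))"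
    using ad_f1_J[OF J_a[OF assms]] by (metis J_J bracket_simps(8) minus_minus)
  then have "inner f2 (br f1 x) = - inner f1 (br f1 (J x))" by simp
  also have "\<dots> = 0" using ad_f1_a_f1_component[OF J_a[OF assms]] by simp
  finally have "a_part (br f1 x) = br f1 x"
    using ad_f1_a_f1_component[OF assms] unfolding a_part_def by simp
  then show ?thesis by (metis a_part_in_a)
qed

lemma bracket_f12_decomp: "br f1 f2 = inner f2 (br f1 f2) *\<^sub>R f2 + a_part (br f1 f2)"
  using a_part_decomp[of "br f1 f2"] bracket_f12_f1_component by simp

lemma linear_frame_expansion:
  assumes "linear \<theta>"
  shows "\<theta> x = inner f1 x * \<theta> f1 + inner f2 x * \<theta> f2 + \<theta> (a_part x)"
  using assms by (subst (1) a_part_decomp[of x]) (simp add: linear_add linear_cmul)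

lemma lee_f2_eq_0:
  assumes "lee_form br J \<theta>" "y \<in> a" "y \<noteq> 0"
  shows "\<theta> f2 = 0"
proof -
  have Jy: "J y \<in> a" using J_a assms(2) .
  have "br (J y) f2 = 0" using bracket_antisym[of f2 "J y"] ad_f2_a[OF Jy] by simp
  then have "\<theta> f2 * inner y y = 0"
    using lee_formD(3)[OF assms(1), of f2 y "J y"] ad_f2_a assms(2) Jy a_abelian[OF assms(2) Jy]
    by (simp add: inner_J_left)
  then show ?thesis using assms(3) by simp
qed

lemma lee_on_a:
  assumes "lee_form br J \<theta>" "z \<in> a"
  shows "\<theta> z = - inner (J (a_part (br f1 f2))) z"
proof -
  have "br z f1 = - br f1 z" by (rule bracket_antisym)
  then have "\<theta> z = - inner (J (br f1 f2)) z"
    using lee_formD(3)[OF assms(1), of f1 f2 z] ad_f2_a[OF assms(2)] assms(2) ad_f1_in_a[OF assms(2)]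
    by (simp add: inner_J_left)
  also have "J (br f1 f2) = - inner f2 (br f1 f2) *\<^sub>R f1 + J (a_part (br f1 f2))"
    by (subst bracket_f12_decomp) simp
  finally show ?thesis using assms(2) by (simp add: inner_add_left inner_diff_left)
qed

lemma lee_ad_f1_diagonal:
  assumes "lee_form br J \<theta>" "y \<in> a"
  shows "inner (br f1 y) y = - (\<theta> f1 / 2) * inner y y"
proof -
  have Jy: "J y \<in> a" using J_a assms(2) .
  have "br (J y) f1 = - J (br f1 y)" using bracket_antisym[of f1 "J y"] ad_f1_J[OF assms(2)] by simp
  then have "- 2 * inner (br f1 y) y = \<theta> f1 * inner y y"
    using lee_formD(3)[OF assms(1), of f1 y "J y"] a_abelian[OF assms(2) Jy] Jy assms(2) J_f1
    by simp
  then show ?thesis by simp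
qed

lemma lee_eq_0_if_J_orthogonal:
  assumes "lee_form br J \<theta>" "x \<in> a" "y \<in> a" "y \<noteq> 0" "inner x y = 0" "inner (J x) y = 0"
  shows "\<theta> x = 0"
proof -
  have "J y \<in> a" using J_a assms(3) .
  then have "\<theta> x * inner y y = 0"
    using lee_formD(3)[OF assms(1), of x y "J y"] a_abelian assms by simp
  then show ?thesis using assms(4) by simp
qed

text \<open>Closedness \<open>\<theta>[f\<^sub>1, w] = 0\<close> at \<open>w = J (a_part [f\<^sub>1, f\<^sub>2])\<close> pits
\<open>lee_on_a\<close> against \<open>lee_ad_f1_diagonal\<close>.\<close>

lemma lee_f1_nonzero_a_part_bracket_f12:
  assumes "lee_form br J \<theta>" "\<theta> f1 \<noteq> 0"
  shows "a_part (br f1 f2) = 0"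
proof -
  define w where "w = J (a_part (br f1 f2))"
  have wa: "w \<in> a" unfolding w_def by (simp add: J_a)
  have "0 = \<theta> (br f1 w)" using lee_formD(2)[OF assms(1)] by simp
  also have "\<dots> = - inner w (br f1 w)" using lee_on_a[OF assms(1) ad_f1_in_a[OF wa]] unfolding w_def .
  also have "\<dots> = (\<theta> f1 / 2) * inner w w"
    using lee_ad_f1_diagonal[OF assms(1) wa] by (simp add: inner_commute)
  finally have "w = 0" using assms(2) by simp
  then have "J w = 0" by simp
  then show ?thesis unfolding w_def by simp
qed

lemma lee_f1_eq_0_witness:
  assumes "lee_form br J \<theta>" "\<theta> f1 = 0" "dim a \<ge> 1"
  obtains x where "x \<in> a" "\<theta> x \<noteq> 0"
proof -
  obtain y where "y \<in> a" "y \<noteq> 0" using a_nonzero assms(3) by blast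
  then have "\<theta> f2 = 0" by (rule lee_f2_eq_0[OF assms(1)])
  obtain x where "\<theta> x \<noteq> 0" using assms(1) unfolding lee_form_def by blast
  then have "\<theta> (a_part x) \<noteq> 0"
    using linear_frame_expansion[OF lee_formD(1)[OF assms(1)], of x] assms(2) \<open>\<theta> f2 = 0\<close> by simp
  then show ?thesis using that a_part_in_a by blast
qed

lemma lee_f1_eq_0_dim_a_le_2:
  assumes "lee_form br J \<theta>" "\<theta> f1 = 0" "dim a \<ge> 1"
  shows "dim a \<le> 2"
proof (rule ccontr)
  assume "\<not> dim a \<le> 2"
  obtain x where x: "x \<in> a" "\<theta> x \<noteq> 0" using lee_f1_eq_0_witness[OF assms] .
  obtain y where "y \<in> a" "y \<noteq> 0" "inner x y = 0" "inner (J x) y = 0"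
    using subspace_exists_orthogonal_to_pair[OF subspace_a x(1) J_a[OF x(1)]] \<open>\<not> dim a \<le> 2\<close>
    by auto
  then have "\<theta> x = 0" by (intro lee_eq_0_if_J_orthogonal[OF assms(1) x(1)])
  with x(2) show False ..
qed

lemma lee_f1_eq_0_a_part_bracket_f12:
  assumes "lee_form br J \<theta>" "\<theta> f1 = 0" "dim a \<ge> 1"
  shows "a_part (br f1 f2) \<noteq> 0"
proof
  assume "a_part (br f1 f2) = 0"
  moreover obtain x where "x \<in> a" "\<theta> x \<noteq> 0" using lee_f1_eq_0_witness[OF assms] .
  ultimately show False using lee_on_a[OF assms(1)] by simp
qed

lemma lee_f1_eq_0_ad_f1_a:
  assumes "lee_form br J \<theta>" "\<theta> f1 = 0" "dim a = 2"
  shows "\<forall>x\<in>a. br f1 x = 0"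
proof -
  define v where "v = a_part (br f1 f2)"
  have va: "v \<in> a" "J v \<in> a" unfolding v_def by (simp_all add: J_a)
  have v: "v \<noteq> 0" using lee_f1_eq_0_a_part_bracket_f12[OF assms(1,2)] assms(3) unfolding v_def by simp
  then have Jv: "J v \<noteq> 0" by (metis J_J J_simps(5) neg_0_equal_iff_equal)
  have expand: "x = (inner x v / inner v v) *\<^sub>R v + (inner x (J v) / inner (J v) (J v)) *\<^sub>R J v"
    if "x \<in> a" for x
    by (rule dim_2_orthogonal_expansion[OF subspace_a assms(3) va v Jv _ that]) simp
  have "br f1 x = (inner (br f1 x) v / inner v v) *\<^sub>R v" if "x \<in> a" for x
  proof -
    have "inner (br f1 x) (J v) = 0"
      using lee_on_a[OF assms(1) ad_f1_in_a[OF that]] lee_formD(2)[OF assms(1)]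
      unfolding v_def by (simp add: inner_commute)
    then show ?thesis
      using expand[OF ad_f1_in_a[OF that]] by simp
  qed
  then have "br f1 v = (inner (br f1 v) v / inner v v) *\<^sub>R v" using va(1) .
  also have "\<dots> = 0" using lee_ad_f1_diagonal[OF assms(1) va(1)] assms(2) by simp
  finally have "br f1 v = 0" .
  moreover have "br f1 (J v) = 0" using ad_f1_J[OF va(1)] \<open>br f1 v = 0\<close> by simp
  ultimately show ?thesis
    using arg_cong[OF expand, of _ "br f1"] by simp
qed

lemma dim_derived_ge_2:
  assumes "lee_form br J \<theta>" "\<theta> f1 \<noteq> 0" "dim a \<ge> 1"
  shows "dim (derived br) \<ge> 2"
proof -
  obtain y where y: "y \<in> a" "y \<noteq> 0" using a_nonzero assms(3) by blast
  define p where "p = br f1 y"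
  have "inner p y = - (\<theta> f1 / 2) * inner y y"
    unfolding p_def by (rule lee_ad_f1_diagonal[OF assms(1) y(1)])
  then have p: "p \<noteq> 0" using assms(2) y(2) by auto
  then have Jp: "J p \<noteq> 0" by (metis J_J J_simps(5) neg_0_equal_iff_equal)
  have "p \<noteq> J p" using p by (metis inner_J_self(2) inner_eq_zero_iff)
  moreover have "independent {p, J p}"
    using p Jp
    by (intro pairwise_orthogonal_independent) (auto simp: pairwise_def orthogonal_def inner_commute)
  moreover have "{p, J p} \<subseteq> derived br"
    using bracket_in_derived[of f1 y] bracket_in_derived[of f1 "J y"] ad_f1_J[OF y(1)]
    unfolding p_def by auto
  ultimately show ?thesis using independent_card_le_dim[of "{p, J p}" "derived br"] by simp
qed

lemma dim_derived_le_1: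
  assumes "\<forall>x\<in>a. br f1 x = 0"
  shows "dim (derived br) \<le> 1"
proof -
  have "br x y \<in> span {br f1 f2}" for x y
    using bracket_expansion[of x y] assms by (simp add: span_base span_scale)
  then have "derived br \<subseteq> span {br f1 f2}"
    unfolding derived_def by (intro span_minimal) (auto simp: subspace_span)
  then have "dim (derived br) \<le> dim (span {br f1 f2})" by (rule dim_subset)
  also have "\<dots> \<le> 1" by (simp add: dim_span dim_le_card')
  finally show ?thesis .
qed

lemma fundamental_form_expansion:
  "inner (J x) y = inner f1 x * inner f2 y - inner f2 x * inner f1 y + inner (J (a_part x)) (a_part y)"
proof -
  have "J x = inner f1 x *\<^sub>R f2 - inner f2 x *\<^sub>R f1 + J (a_part x)"
    by (subst a_part_decomp[of x]) (simp add: J_f1)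
  then have "inner (J x) y = inner f1 x * inner f2 y - inner f2 x * inner f1 y + inner (J (a_part x)) y"
    by (simp add: inner_add_left inner_diff_left)
  then show ?thesis using inner_a_part[OF J_a[OF a_part_in_a[of x]], of y] by simp
qed

lemma fundamental_form_bracket:
  "inner (J (br x y)) z = (inner f1 x * inner f2 y - inner f2 x * inner f1 y) * inner (J (br f1 f2)) z
     + inner f1 x * inner (J (br f1 (a_part y))) (a_part z)
     - inner f1 y * inner (J (br f1 (a_part x))) (a_part z)"
  using inner_a_part[OF J_a[OF ad_f1_in_a[OF a_part_in_a[of x]]], of z]
    inner_a_part[OF J_a[OF ad_f1_in_a[OF a_part_in_a[of y]]], of z]
  by (subst bracket_expansion) (simp add: inner_add_left inner_diff_left)

lemma ce_d2_expansion: "ce_d2 br (fundamental_form J) x y z =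
   - ((inner f1 x * inner f2 y - inner f2 x * inner f1 y) * inner (J (br f1 f2)) z
   + inner f1 x * inner (J (br f1 (a_part y))) (a_part z) - inner f1 y * inner (J (br f1 (a_part x))) (a_part z))
   - ((inner f1 y * inner f2 z - inner f2 y * inner f1 z) * inner (J (br f1 f2)) x
   + inner f1 y * inner (J (br f1 (a_part z))) (a_part x) - inner f1 z * inner (J (br f1 (a_part y))) (a_part x))
   - ((inner f1 z * inner f2 x - inner f2 z * inner f1 x) * inner (J (br f1 f2)) y
   + inner f1 z * inner (J (br f1 (a_part x))) (a_part y) - inner f1 x * inner (J (br f1 (a_part z))) (a_part y))"
  unfolding ce_d2_def fundamental_form_def
  by (simp only: fundamental_form_bracket[of x y z] fundamental_form_bracket[of y z x]
    fundamental_form_bracket[of z x y])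

lemma wedge12_expansion: "wedge12 \<theta> (fundamental_form J) x y z =
   \<theta> x * (inner f1 y * inner f2 z - inner f2 y * inner f1 z + inner (J (a_part y)) (a_part z))
 - \<theta> y * (inner f1 x * inner f2 z - inner f2 x * inner f1 z + inner (J (a_part x)) (a_part z))
 + \<theta> z * (inner f1 x * inner f2 y - inner f2 x * inner f1 y + inner (J (a_part x)) (a_part y))"
  unfolding wedge12_def fundamental_form_def
  by (simp only: fundamental_form_expansion[of y z] fundamental_form_expansion[of x z]
    fundamental_form_expansion[of x y])

lemma lee_form_of_conformal:
  assumes conf: "\<And>x y. x \<in> a \<Longrightarrow> y \<in> a \<Longrightarrow> inner (br f1 x) y + inner x (br f1 y) = 2 * lam * inner x y"
    and bracket: "br f1 f2 = \<mu> *\<^sub>R f2" and "lam \<noteq> 0"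
  shows "lee_form br J (\<lambda>x. - 2 * lam * inner f1 x)"
proof -
  define P where "P u v = inner (J (br f1 u)) v" for u v
  define \<Omega> where "\<Omega> u v = inner (J u) v" for u v
  have P_swap: "P v u = P u v - 2 * lam * \<Omega> u v" if "u \<in> a" "v \<in> a" for u v
  proof -
    have "P v u = inner (br f1 (J v)) u" unfolding P_def using ad_f1_J[OF that(2)] by simp
    also have "\<dots> = 2 * lam * inner (J v) u - inner (J v) (br f1 u)"
      using conf[OF J_a[OF that(2)] that(1)] by simp
    finally show ?thesis
      unfolding P_def \<Omega>_def using inner_J_left[of v "br f1 u"] inner_J_left[of v u]
      by (simp add: inner_commute)
  qed
  have "inner f1 (br x y) = 0" for x y
    by (subst bracket_expansion) (simp add: bracket inner_add_right inner_diff_right ad_f1_in_a)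
  moreover have "ce_d2 br (fundamental_form J) x y z =
      wedge12 (\<lambda>x. - 2 * lam * inner f1 x) (fundamental_form J) x y z" for x y z
  proof -
    have bracket_form: "inner (J (br f1 f2)) w = - \<mu> * inner f1 w" for w by (simp add: bracket J_f1)
    show ?thesis
      unfolding ce_d2_expansion wedge12_expansion bracket_form
      unfolding P_def[symmetric]
      unfolding \<Omega>_def[symmetric] P_swap[of "a_part y" "a_part z", OF a_part_in_a a_part_in_a]
        P_swap[of "a_part x" "a_part z", OF a_part_in_a a_part_in_a]
        P_swap[of "a_part x" "a_part y", OF a_part_in_a a_part_in_a]
      by (simp add: algebra_simps)
  qed
  moreover have "linear (\<lambda>x. - 2 * lam * inner f1 x)"
    by (rule linearI) (simp_all add: inner_add_right algebra_simps)
  moreover have "(\<lambda>x. - 2 * lam * inner f1 x) \<noteq> (\<lambda>_. 0)"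
    using \<open>lam \<noteq> 0\<close> fun_cong[of "\<lambda>x. - 2 * lam * inner f1 x" "\<lambda>_. 0" f1] by auto
  ultimately show ?thesis unfolding lee_form_def ce_d1_def by simp
qed

lemma lee_form_unique_of_conformal:
  assumes conf: "\<And>x y. x \<in> a \<Longrightarrow> y \<in> a \<Longrightarrow> inner (br f1 x) y + inner x (br f1 y) = 2 * lam * inner x y"
    and "lam \<noteq> 0" "dim a \<ge> 1" and lee: "lee_form br J \<theta>"
  shows "\<theta> = (\<lambda>x. - 2 * lam * inner f1 x)"
proof
  obtain y where y: "y \<in> a" "y \<noteq> 0" using a_nonzero assms(3) by blast
  have "(\<theta> f1 + 2 * lam) * inner y y = 0"
    using lee_ad_f1_diagonal[OF lee y(1)] conf[OF y(1) y(1)] by (simp add: inner_commute algebra_simps)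
  then have \<theta>1: "\<theta> f1 = - 2 * lam" using y by simp
  then have "a_part (br f1 f2) = 0" using \<open>lam \<noteq> 0\<close> by (intro lee_f1_nonzero_a_part_bracket_f12[OF lee]) simp
  then have "\<theta> (a_part x) = 0" for x using lee_on_a[OF lee a_part_in_a, of x] by simp
  then show "\<theta> x = - 2 * lam * inner f1 x" for x
    using linear_frame_expansion[OF lee_formD(1)[OF lee], of x] \<theta>1 lee_f2_eq_0[OF lee y] by simp
qed

lemma ltrace_bracket_of_conformal:
  assumes conf: "\<And>x y. x \<in> a \<Longrightarrow> y \<in> a \<Longrightarrow> inner (br f1 x) y + inner x (br f1 y) = 2 * lam * inner x y"
    and bracket: "br f1 f2 = \<mu> *\<^sub>R f2"
  shows "ltrace (br x) = inner f1 x * (\<mu> + lam * (real DIM('g) - 2))"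
proof -
  have diag: "inner (br x b) b = \<mu> * inner f1 x * (inner f2 b * inner f2 b)
     - \<mu> * inner f2 x * (inner f1 b * inner f2 b)
     + inner f1 x * lam * (inner b b - inner f1 b * inner f1 b - inner f2 b * inner f2 b)
     - inner f1 b * inner (br f1 (a_part x)) b" for b
  proof -
    have "inner (br x b) b = (inner f1 x * inner f2 b - inner f2 x * inner f1 b) * (\<mu> * inner f2 b)
      + inner f1 x * inner (br f1 (a_part b)) b - inner f1 b * inner (br f1 (a_part x)) b"
      by (subst bracket_expansion) (simp add: bracket inner_add_left inner_diff_left)
    also have "inner (br f1 (a_part b)) b = lam * inner (a_part b) (a_part b)"
      using inner_a_part[OF ad_f1_in_a[OF a_part_in_a], of b b] conf[OF a_part_in_a a_part_in_a, of b b]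
      by (simp add: inner_commute)
    also have "inner (a_part b) (a_part b) = inner b b - inner f1 b * inner f1 b - inner f2 b * inner f2 b"
      unfolding a_part_def by (simp add: inner_diff_left inner_diff_right inner_commute algebra_simps)
    finally show ?thesis by (simp add: algebra_simps)
  qed
  have "(\<Sum>b\<in>Basis. inner f1 b * inner (br f1 (a_part x)) b) = 0"
    using euclidean_inner[of f1 "br f1 (a_part x)"] ad_f1_in_a[OF a_part_in_a, of x] by simp
  moreover have "(\<Sum>b\<in>Basis. inner f1 b * inner f2 b) = 0" "(\<Sum>b\<in>Basis. inner f1 b * inner f1 b) = 1"
    "(\<Sum>b\<in>Basis. inner f2 b * inner f2 b) = 1"
    using euclidean_inner[of f1 f2] euclidean_inner[of f1 f1] euclidean_inner[of f2 f2] by simp_all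
  moreover have "(\<Sum>b\<in>(Basis::'g set). inner b b) = real DIM('g)" by simp
  ultimately show ?thesis
    unfolding ltrace_def diag
    by (simp add: sum_subtractf sum.distrib flip: sum_distrib_left) (simp add: algebra_simps)
qed

lemma span_f12_eq_orthogonal_a: "span {f1, f2} = {x. \<forall>y\<in>a. inner x y = 0}"
proof
  show "span {f1, f2} \<subseteq> {x. \<forall>y\<in>a. inner x y = 0}"
  proof
    fix z assume z: "z \<in> span {f1, f2}"
    have "orthogonal y z" if "y \<in> a" for y
      by (rule orthogonal_to_span[OF z]) (use that in \<open>auto simp: orthogonal_def\<close>)
    then show "z \<in> {x. \<forall>y\<in>a. inner x y = 0}" by (simp add: orthogonal_def inner_commute)
  qed
  show "{x. \<forall>y\<in>a. inner x y = 0} \<subseteq> span {f1, f2}"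
  proof
    fix z assume "z \<in> {x. \<forall>y\<in>a. inner x y = 0}"
    then have "inner z (a_part z) = 0" by simp
    moreover have "inner (a_part z) (a_part z) = inner z (a_part z)"
      using orth_a[OF a_part_in_a[of z]] by (subst (1) a_part_def) (simp add: inner_diff_left)
    ultimately have "z = inner f1 z *\<^sub>R f1 + inner f2 z *\<^sub>R f2" using a_part_decomp[of z] by simp
    also have "\<dots> \<in> span {f1, f2}" by (intro span_add span_scale span_base) auto
    finally show "z \<in> span {f1, f2}" .
  qed
qed

end

lemma (in lie_hermitian) almost_abelian_adapted_frame:
  assumes "almost_abelian br" "DIM('g) = 2 * n + 2"
  obtains f1 f2 a where "adapted_frame br J f1 f2 a" "dim a = 2 * n"
proof -
  obtain u where u: "subspace u" "dim u + 1 = DIM('g)" "\<And>x y. x \<in> u \<Longrightarrow> br y x \<in> u"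
    "\<And>x y. x \<in> u \<Longrightarrow> y \<in> u \<Longrightarrow> br x y = 0"
    using assms(1) unfolding almost_abelian_def by blast
  obtain h where h: "h \<noteq> 0" "span u \<subseteq> {x. h \<bullet> x = 0}"
    using lowdim_subset_hyperplane[of u] u(2) by auto
  define f1 where "f1 = h /\<^sub>R norm h"
  define f2 where "f2 = J f1"
  have f1: "norm f1 = 1" "f1 \<noteq> 0" using h(1) unfolding f1_def by auto
  have inner_f: "inner f1 f1 = 1" "inner f2 f2 = 1" "inner f1 f2 = 0" "inner f2 f1 = 0"
    using f1 unfolding f2_def by (simp_all add: norm_eq_1 inner_commute)
  have uH: "u = {x. inner f1 x = 0}"
  proof (rule subspace_dim_equal)
    show "u \<subseteq> {x. inner f1 x = 0}" using h span_superset unfolding f1_def by fastforce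
    show "dim {x. inner f1 x = 0} \<le> dim u" using dim_hyperplane[OF f1(2)] u(2) by simp
  qed (use u(1) subspace_hyperplane in auto)
  define a where "a = {x. inner f1 x = 0 \<and> inner f2 x = 0}"
  have au: "a \<subseteq> u" and f2u: "f2 \<in> u" unfolding a_def uH using inner_f by auto
  have "adapted_frame br J f1 f2 a"
  proof (unfold_locales)
    show "J y \<in> a" if "y \<in> a" for y
      using that inner_J_left[of f1 y] unfolding a_def f2_def by (simp add: inner_commute)
    show "inner f1 (br f1 x) = 0" if "x \<in> a" for x
      using u(3)[of x f1] that au unfolding uH by auto
    show "inner f1 (br f1 f2) = 0" using u(3)[OF f2u, of f1] unfolding uH by auto
  qed (use au f2u u(4) f1 inner_f in \<open>auto simp: a_def f2_def subspace_def inner_add_right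
    inner_diff_right\<close>)
  moreover have "dim a = 2 * n"
  proof -
    have "a = {y \<in> u. \<forall>x\<in>span {f2}. orthogonal x y}"
      unfolding a_def uH by (auto simp: span_singleton orthogonal_def)
    moreover have "dim {y \<in> u. \<forall>x\<in>span {f2}. orthogonal x y} + dim (span {f2}) = dim u"
      using f2u u(1) by (intro dim_subspace_orthogonal_to_vectors subspace_span) (simp_all add: span_minimal)
    moreover have "dim (span {f2}) = 1" using inner_f(2) by auto
    ultimately show ?thesis using u(2) assms(2) by simp
  qed
  ultimately show ?thesis using that by blast
qed

section \<open>Derived algebra of dimension one\<close>

definition lck_rank_one_frame ::
  "('g::real_inner \<Rightarrow> 'g \<Rightarrow> 'g) \<Rightarrow> ('g \<Rightarrow> 'g) \<Rightarrow> 'g \<Rightarrow> 'g \<Rightarrow> 'g \<Rightarrow> 'g \<Rightarrow> real \<Rightarrow> real \<Rightarrow> real \<Rightarrow> bool"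
  where "lck_rank_one_frame br J f1 f2 u v \<mu> m k \<longleftrightarrow>
           norm f1 = 1 \<and> norm f2 = 1 \<and> norm u = 1 \<and> norm v = 1 \<and>
           inner f1 f2 = 0 \<and> inner f1 u = 0 \<and> inner f1 v = 0 \<and>
           inner f2 u = 0 \<and> inner f2 v = 0 \<and> inner u v = 0 \<and>
           span {f1, f2, u, v} = UNIV \<and> J f1 = f2 \<and> J u = v \<and>
           br f1 f2 = \<mu> *\<^sub>R f2 + m *\<^sub>R u + k *\<^sub>R v \<and>
           br f1 u = 0 \<and> br f1 v = 0 \<and> br f2 u = 0 \<and> br f2 v = 0 \<and> br u v = 0 \<and>
           (m, k) \<noteq> (0, 0)"

lemma (in adapted_frame) lck_rank_one_frame_of_lee:
  assumes "lee_form br J \<theta>" "\<theta> f1 = 0" "dim a = 2"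
  shows "\<exists>u v \<mu> m k. lck_rank_one_frame br J f1 f2 u v \<mu> m k"
proof -
  define v where "v = a_part (br f1 f2)"
  define u0 where "u0 = v /\<^sub>R norm v"
  have v: "v \<noteq> 0" using lee_f1_eq_0_a_part_bracket_f12[OF assms(1,2)] assms(3) unfolding v_def by simp
  have ad_f1_0: "\<forall>x\<in>a. br f1 x = 0" using lee_f1_eq_0_ad_f1_a[OF assms] .
  have u0: "u0 \<in> a" "J u0 \<in> a" unfolding u0_def v_def
    using subspace_a J_a by (simp_all add: subspace_scale)
  have "inner u0 u0 = 1" unfolding u0_def using v by (simp add: dot_square_norm power2_eq_square)
  then have inner_u0: "inner u0 u0 = 1" "inner (J u0) (J u0) = 1" by simp_all
  then have u0_0: "u0 \<noteq> 0" "J u0 \<noteq> 0" by (metis inner_zero_left zero_neq_one)+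
  have "span {f1, f2, u0, J u0} = UNIV"
  proof -
    have "a_part x = inner (a_part x) u0 *\<^sub>R u0 + inner (a_part x) (J u0) *\<^sub>R J u0" for x
      using dim_2_orthogonal_expansion[OF subspace_a assms(3) u0 u0_0 _ a_part_in_a] inner_u0
      by simp
    then have "x \<in> span {f1, f2, u0, J u0}" for x
      by (subst a_part_decomp[of x]) (metis (no_types, lifting) span_add span_base span_scale
        insertCI)
    then show ?thesis by auto
  qed
  moreover have "br f1 f2 = inner f2 (br f1 f2) *\<^sub>R f2 + norm v *\<^sub>R u0 + 0 *\<^sub>R J u0"
    using bracket_f12_decomp v unfolding u0_def v_def by simp
  ultimately have "lck_rank_one_frame br J f1 f2 u0 (J u0) (inner f2 (br f1 f2)) (norm v) 0"
    unfolding lck_rank_one_frame_def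
    using inner_u0 u0 v ad_f1_0 ad_f2_a a_abelian[OF u0] J_f1 by (simp add: norm_eq_1)
  then show ?thesis by blast
qed

locale rank_one_frame = lie_hermitian br J for br :: "'g::euclidean_space \<Rightarrow> 'g \<Rightarrow> 'g" and J +
  fixes f1 f2 u v :: 'g and \<mu> m k :: real
  assumes frame: "lck_rank_one_frame br J f1 f2 u v \<mu> m k"
begin

lemma inner_frame [simp]:
  "inner f1 f1 = 1" "inner f2 f2 = 1" "inner u u = 1" "inner v v = 1"
  "inner f1 f2 = 0" "inner f1 u = 0" "inner f1 v = 0" "inner f2 u = 0" "inner f2 v = 0" "inner u v = 0"
  "inner f2 f1 = 0" "inner u f1 = 0" "inner v f1 = 0" "inner u f2 = 0" "inner v f2 = 0" "inner v u = 0"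
  using frame by (simp_all add: lck_rank_one_frame_def norm_eq_1 inner_commute)

lemma frame_J [simp]: "J f1 = f2" "J u = v" "J v = - u"
  using frame J_J[of u] by (simp_all add: lck_rank_one_frame_def)

lemma bracket_f12: "br f1 f2 = \<mu> *\<^sub>R f2 + m *\<^sub>R u + k *\<^sub>R v"
  using frame by (simp add: lck_rank_one_frame_def)

lemma frame_bracket_zero [simp]: "br f1 u = 0" "br f1 v = 0" "br f2 u = 0" "br f2 v = 0" "br u v = 0"
  "br v u = 0"
  using frame bracket_antisym[of u v] by (simp_all add: lck_rank_one_frame_def)

lemma frame_expansion: "x = inner f1 x *\<^sub>R f1 + inner f2 x *\<^sub>R f2 + inner u x *\<^sub>R u + inner v x *\<^sub>R v"
proof -
  let ?r = "x - (inner f1 x *\<^sub>R f1 + inner f2 x *\<^sub>R f2 + inner u x *\<^sub>R u + inner v x *\<^sub>R v)"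
  have "inner y ?r = 0" if "y \<in> {f1, f2, u, v}" for y
    using that by (auto simp: inner_diff_right inner_add_right)
  then have "orthogonal ?r y" if "y \<in> {f1, f2, u, v}" for y
    using that by (simp add: orthogonal_def inner_commute)
  then have "orthogonal ?r ?r"
    using frame by (intro orthogonal_to_span[of ?r "{f1, f2, u, v}"]) (auto simp: lck_rank_one_frame_def)
  then show ?thesis by (simp add: orthogonal_def)
qed

lemma span_uv_coords: "y \<in> span {u, v} \<Longrightarrow> y = inner u y *\<^sub>R u + inner v y *\<^sub>R v"
  by (rule orthonormal_pair_span_coords) simp_all

lemma in_span_uv: "s *\<^sub>R u + t *\<^sub>R v \<in> span {u, v}"
  by (intro span_add span_scale span_base) auto

sublocale A: adapted_frame br J f1 f2 "span {u, v}"
proof (unfold_locales)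
  fix y assume "y \<in> span {u, v}"
  then have y: "y = inner u y *\<^sub>R u + inner v y *\<^sub>R v" by (rule span_uv_coords)
  show "inner f1 y = 0" "inner f2 y = 0" "br f2 y = 0" "inner f1 (br f1 y) = 0"
    by (subst y; simp add: inner_add_right)+
  show "J y \<in> span {u, v}" using in_span_uv[of "- inner v y" "inner u y"]
    by (subst y) (simp add: algebra_simps)
next
  fix x
  show "x - inner f1 x *\<^sub>R f1 - inner f2 x *\<^sub>R f2 \<in> span {u, v}"
    using in_span_uv by (subst (1 2 3) frame_expansion[of x]) (simp add: algebra_simps)
next
  fix x y assume x: "x \<in> span {u, v}" and y: "y \<in> span {u, v}"
  show "br x y = 0" by (subst span_uv_coords[OF x], subst span_uv_coords[OF y]) simp
qed (simp_all add: subspace_span bracket_f12 inner_add_right norm_eq_1)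

lemma a_part_eq: "A.a_part x = inner u x *\<^sub>R u + inner v x *\<^sub>R v"
  unfolding A.a_part_def by (subst (1) frame_expansion) simp

lemma bracket_eq: "br x y = (inner f1 x * inner f2 y - inner f2 x * inner f1 y) *\<^sub>R br f1 f2"
  using A.bracket_expansion[of x y] by (simp add: a_part_eq)

lemma lee_form: "lee_form br J (\<lambda>x. k * inner u x - m * inner v x)"
proof -
  have "linear (\<lambda>x. k * inner u x - m * inner v x)"
    by (rule linearI) (simp_all add: inner_add_right algebra_simps)
  moreover have "(\<lambda>x. k * inner u x - m * inner v x) \<noteq> (\<lambda>_. 0)"
    using frame fun_cong[of "\<lambda>x. k * inner u x - m * inner v x" "\<lambda>_. 0" u]
      fun_cong[of "\<lambda>x. k * inner u x - m * inner v x" "\<lambda>_. 0" v]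
    by (auto simp: lck_rank_one_frame_def)
  moreover have "ce_d1 br (\<lambda>x. k * inner u x - m * inner v x) x y = 0" for x y
    unfolding ce_d1_def bracket_eq[of x y] by (simp add: bracket_f12 inner_add_right algebra_simps)
  moreover have "ce_d2 br (fundamental_form J) x y z =
      wedge12 (\<lambda>x. k * inner u x - m * inner v x) (fundamental_form J) x y z" for x y z
  proof -
    have bracket_form: "inner (J (br f1 f2)) w = - \<mu> * inner f1 w + m * inner v w - k * inner u w" for w
      by (simp add: bracket_f12 inner_add_left inner_diff_left)
    have a_form: "inner (J (A.a_part p)) (A.a_part q) = inner u p * inner v q - inner v p * inner u q"
      for p q by (simp add: a_part_eq inner_add_left inner_add_right inner_diff_left)
    have "br f1 (A.a_part p) = 0" for p by (simp add: a_part_eq)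
    then show ?thesis
      unfolding A.ce_d2_expansion A.wedge12_expansion bracket_form a_form
      by (simp add: algebra_simps)
  qed
  ultimately show ?thesis unfolding lee_form_def by blast
qed

lemma isomorphic_h3_times_R:
  assumes "\<mu> = 0"
  shows "lie_isomorphic br h3_times_R"
proof -
  define N where "N = m * m + k * k"
  have N: "N \<noteq> 0" using frame unfolding N_def lck_rank_one_frame_def by (simp add: add_nonneg_eq_0_iff)
  have div: "(m * s + k * t) / N * m - (- k * s + m * t) / N * k = s"
    "(m * s + k * t) / N * k + (- k * s + m * t) / N * m = t"
    "(m * (s * m - t * k) + k * (s * k + t * m)) / N = s"
    "(- k * (s * m - t * k) + m * (s * k + t * m)) / N = t" for s t
    using N by (simp_all add: field_simps) (simp_all add: N_def algebra_simps)
  \<comment> \<open>\<open>\<psi>\<close> sends the standard basis to \<open>f\<^sub>1, f\<^sub>2, [f\<^sub>1, f\<^sub>2] = m u + k v, - k u + m v\<close>\<close>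
  define \<phi> where "\<phi> x = (inner f1 x, inner f2 x, (m * inner u x + k * inner v x) / N,
     (- k * inner u x + m * inner v x) / N)" for x
  define \<psi> where "\<psi> = (\<lambda>(a1::real, b1::real, c1::real, d1::real).
     a1 *\<^sub>R f1 + b1 *\<^sub>R f2 + (c1 * m - d1 * k) *\<^sub>R u + (c1 * k + d1 * m) *\<^sub>R v)"
  have lin: "linear \<phi>"
    by (rule linearI) (simp_all add: \<phi>_def inner_add_right algebra_simps add_divide_distrib diff_divide_distrib)
  have "\<psi> \<circ> \<phi> = id"
    using frame_expansion div by (auto simp: \<psi>_def \<phi>_def)
  moreover have "\<phi> \<circ> \<psi> = id"
    using div by (auto simp: \<psi>_def \<phi>_def inner_add_right)
  ultimately have "bij \<phi>" by (rule o_bij)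
  moreover have "\<phi> (br x y) = h3_times_R (\<phi> x) (\<phi> y)" for x y
  proof -
    have "\<phi> (br f1 f2) = (0, 0, 1, 0)"
      using N assms by (simp add: \<phi>_def bracket_f12 inner_add_right N_def[symmetric])
    then show ?thesis
      unfolding bracket_eq[of x y] linear_cmul[OF lin] by (simp add: \<phi>_def[of x] \<phi>_def[of y] h3_times_R_def)
  qed
  ultimately show ?thesis unfolding lie_isomorphic_def using lin by blast
qed

lemma isomorphic_aff_times_R2:
  assumes "\<mu> \<noteq> 0"
  shows "lie_isomorphic br aff_times_R2"
proof -
  \<comment> \<open>\<open>\<psi>\<close> sends the standard basis to \<open>f\<^sub>1 / \<mu>, [f\<^sub>1, f\<^sub>2], u, v\<close>\<close>
  define \<phi> where "\<phi> x = (\<mu> * inner f1 x, inner f2 x / \<mu>, inner u x - inner f2 x * m / \<mu>,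
     inner v x - inner f2 x * k / \<mu>)" for x
  define \<psi> where "\<psi> = (\<lambda>(a1::real, b1::real, c1::real, d1::real).
     (a1 / \<mu>) *\<^sub>R f1 + (b1 * \<mu>) *\<^sub>R f2 + (b1 * m + c1) *\<^sub>R u + (b1 * k + d1) *\<^sub>R v)"
  have lin: "linear \<phi>"
    by (rule linearI) (simp_all add: \<phi>_def inner_add_right algebra_simps add_divide_distrib)
  have "\<psi> \<circ> \<phi> = id"
    using assms frame_expansion by (auto simp: \<psi>_def \<phi>_def)
  moreover have "\<phi> \<circ> \<psi> = id"
    using assms by (auto simp: \<psi>_def \<phi>_def inner_add_right)
  ultimately have "bij \<phi>" by (rule o_bij)
  moreover have "\<phi> (br x y) = aff_times_R2 (\<phi> x) (\<phi> y)" for x y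
  proof -
    have "\<phi> (br f1 f2) = (0, 1, 0, 0)" using assms by (simp add: \<phi>_def bracket_f12 inner_add_right)
    then show ?thesis
      unfolding bracket_eq[of x y] linear_cmul[OF lin] using assms
      by (simp add: \<phi>_def[of x] \<phi>_def[of y] aff_times_R2_def)
  qed
  ultimately show ?thesis unfolding lie_isomorphic_def using lin by blast
qed

end

lemma (in lie_hermitian) rank_one_frameI:
  "lck_rank_one_frame br J f1 f2 u v \<mu> m k \<Longrightarrow> rank_one_frame br J f1 f2 u v \<mu> m k"
  by (intro rank_one_frame.intro rank_one_frame_axioms.intro lie_hermitian_axioms)

section \<open>Derived algebra of dimension at least two\<close>

definition lck_splitting ::
  "('g::real_inner \<Rightarrow> 'g \<Rightarrow> 'g) \<Rightarrow> ('g \<Rightarrow> 'g) \<Rightarrow> nat \<Rightarrow> 'g set \<Rightarrow> 'g \<Rightarrow> 'g \<Rightarrow> real \<Rightarrow> real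
     \<Rightarrow> ('g \<Rightarrow> 'g) \<Rightarrow> bool"
  where "lck_splitting br J n a f1 f2 \<mu> lam B \<longleftrightarrow>
           subspace a \<and> dim a = 2 * n \<and>
           (\<forall>x\<in>a. \<forall>y. br y x \<in> a) \<and> (\<forall>x\<in>a. \<forall>y\<in>a. br x y = 0) \<and>
           J ` a \<subseteq> a \<and>
           f1 \<in> {x. \<forall>y\<in>a. inner x y = 0} \<and> f2 \<in> {x. \<forall>y\<in>a. inner x y = 0} \<and>
           norm f1 = 1 \<and> norm f2 = 1 \<and> inner f1 f2 = 0 \<and>
           span {f1, f2} = {x. \<forall>y\<in>a. inner x y = 0} \<and>
           br f1 f2 = \<mu> *\<^sub>R f2 \<and> f2 = J f1 \<and>
           (\<forall>x\<in>a. br f2 x = 0) \<and>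
           linear B \<and> B ` a \<subseteq> a \<and>
           (\<forall>x\<in>a. \<forall>y\<in>a. inner (B x) y = - inner x (B y)) \<and>
           (\<forall>x\<in>a. B (J x) = J (B x)) \<and>
           (\<forall>x\<in>a. br f1 x = lam *\<^sub>R x + B x) \<and>
           lam \<noteq> 0"

lemma (in adapted_frame) lck_splitting_of_lee:
  assumes lee: "lee_form br J \<theta>" and "\<theta> f1 \<noteq> 0" "dim a = 2 * n"
  shows "lck_splitting br J n a f1 f2 (inner f2 (br f1 f2)) (- \<theta> f1 / 2)
           (\<lambda>x. br f1 x - (- \<theta> f1 / 2) *\<^sub>R x)"
proof -
  define lam where "lam = - \<theta> f1 / 2"
  have diag: "inner (br f1 y) y = lam * inner y y" if "y \<in> a" for y
    using lee_ad_f1_diagonal[OF lee that] unfolding lam_def by simp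
  have conf: "inner (br f1 x) y + inner x (br f1 y) = 2 * lam * inner x y" if "x \<in> a" "y \<in> a" for x y
  proof -
    have "x + y \<in> a" using that subspace_a by (simp add: subspace_add)
    then show ?thesis using diag[of "x + y"] diag[OF that(1)] diag[OF that(2)]
      by (simp add: inner_add_left inner_add_right inner_commute algebra_simps)
  qed
  have "br y x \<in> a" if "x \<in> a" for x y
    using bracket_expansion[of y x] that ad_f1_in_a[OF that] subspace_a
    by (simp add: a_part_id subspace_scale)
  moreover have "br f1 f2 = inner f2 (br f1 f2) *\<^sub>R f2"
    using bracket_f12_decomp lee_f1_nonzero_a_part_bracket_f12[OF assms(1,2)] by simp
  moreover have "(\<lambda>x. br f1 x - lam *\<^sub>R x) ` a \<subseteq> a"
    using ad_f1_in_a subspace_a by (auto simp: subspace_diff subspace_scale)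
  moreover have "linear (\<lambda>x. br f1 x - lam *\<^sub>R x)"
    by (rule linearI) (simp_all add: algebra_simps)
  moreover have "inner (br f1 x - lam *\<^sub>R x) y = - inner x (br f1 y - lam *\<^sub>R y)"
    if "x \<in> a" "y \<in> a" for x y
    using conf[OF that] by (simp add: inner_diff_left inner_diff_right algebra_simps)
  ultimately show ?thesis
    unfolding lck_splitting_def lam_def[symmetric]
    using assms(2,3) subspace_a J_a a_abelian ad_f2_a ad_f1_J span_f12_eq_orthogonal_a norm_f1 J_f1
    by (auto simp: lam_def norm_eq_1)
qed

locale lck_split = lie_hermitian br J for br :: "'g::euclidean_space \<Rightarrow> 'g \<Rightarrow> 'g" and J +
  fixes n :: nat and a :: "'g set" and f1 f2 :: 'g and \<mu> lam :: real and B :: "'g \<Rightarrow> 'g"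
  assumes subspace_a: "subspace a" and dim_a: "dim a = 2 * n"
    and ideal_a: "\<forall>x\<in>a. \<forall>y. br y x \<in> a" and abelian_a: "\<forall>x\<in>a. \<forall>y\<in>a. br x y = 0"
    and J_a: "J ` a \<subseteq> a"
    and f1_perp: "f1 \<in> {x. \<forall>y\<in>a. inner x y = 0}" and f2_perp: "f2 \<in> {x. \<forall>y\<in>a. inner x y = 0}"
    and norm_f1: "norm f1 = 1" and norm_f2: "norm f2 = 1" and inner_f12: "inner f1 f2 = 0"
    and span_f12: "span {f1, f2} = {x. \<forall>y\<in>a. inner x y = 0}"
    and bracket_f12: "br f1 f2 = \<mu> *\<^sub>R f2" and f2_eq: "f2 = J f1"
    and ad_f2_a: "\<forall>x\<in>a. br f2 x = 0"
    and linear_B: "linear B" and B_a: "B ` a \<subseteq> a"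
    and B_skew: "\<forall>x\<in>a. \<forall>y\<in>a. inner (B x) y = - inner x (B y)"
    and B_J: "\<forall>x\<in>a. B (J x) = J (B x)"
    and ad_f1_a: "\<forall>x\<in>a. br f1 x = lam *\<^sub>R x + B x"
    and lam_nonzero: "lam \<noteq> 0"
begin

lemma inner_f [simp]: "inner f1 f1 = 1" "inner f2 f2 = 1"
  using norm_f1 norm_f2 by (simp_all add: norm_eq_1)

lemma conformal: "x \<in> a \<Longrightarrow> y \<in> a \<Longrightarrow> inner (br f1 x) y + inner x (br f1 y) = 2 * lam * inner x y"
  using ad_f1_a B_skew by (simp add: inner_add_left inner_add_right)

sublocale A: adapted_frame br J f1 f2 a
proof (unfold_locales)
  fix x
  obtain y z where yz: "y \<in> span a" "\<And>w. w \<in> span a \<Longrightarrow> orthogonal z w" "x = y + z"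
    using orthogonal_subspace_decomp_exists[of a x] by blast
  have y: "y \<in> a" using yz(1) subspace_a by (metis span_eq_iff)
  have "z \<in> span {f1, f2}"
    using yz(2) span_superset[of a] span_f12 by (auto simp: orthogonal_def)
  then have z: "z = inner f1 z *\<^sub>R f1 + inner f2 z *\<^sub>R f2"
    using inner_f12 by (intro orthonormal_pair_span_coords) simp_all
  have "inner f1 y = 0" "inner f2 y = 0" using y f1_perp f2_perp by auto
  then have "x - inner f1 x *\<^sub>R f1 - inner f2 x *\<^sub>R f2 = y + (z - inner f1 z *\<^sub>R f1 - inner f2 z *\<^sub>R f2)"
    using yz(3) by (simp add: inner_add_right algebra_simps)
  also have "z - inner f1 z *\<^sub>R f1 - inner f2 z *\<^sub>R f2 = 0"
    by (simp only: diff_diff_eq diff_self flip: z)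
  finally show "x - inner f1 x *\<^sub>R f1 - inner f2 x *\<^sub>R f2 \<in> a" using y by simp
next
  fix x assume "x \<in> a"
  then show "inner f1 (br f1 x) = 0" using ideal_a f1_perp by auto
qed (use subspace_a norm_f1 f2_eq f1_perp f2_perp J_a abelian_a ad_f2_a bracket_f12 inner_f12 in auto)

lemma lee_form: "lee_form br J (\<lambda>x. - 2 * lam * inner f1 x)"
  using A.lee_form_of_conformal[OF conformal bracket_f12 lam_nonzero] .

lemma lee_form_unique: "n \<ge> 1 \<Longrightarrow> lee_form br J \<theta> \<Longrightarrow> \<theta> = (\<lambda>x. - 2 * lam * inner f1 x)"
  using A.lee_form_unique_of_conformal[OF conformal lam_nonzero] dim_a by simp

lemma unimodular_iff:
  assumes "n \<ge> 1" "DIM('g) = 2 * n + 2"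
  shows "unimodular br \<longleftrightarrow> lam = - \<mu> / (2 * real n)"
proof -
  have tr: "ltrace (br x) = inner f1 x * (\<mu> + lam * (2 * real n))" for x
    using A.ltrace_bracket_of_conformal[OF conformal bracket_f12, of x] assms(2) by simp
  have "unimodular br \<longleftrightarrow> \<mu> + lam * (2 * real n) = 0"
  proof
    assume "unimodular br"
    then show "\<mu> + lam * (2 * real n) = 0"
      using tr[of f1] unfolding unimodular_def by simp
  qed (simp add: unimodular_def tr)
  also have "\<dots> \<longleftrightarrow> lam = - \<mu> / (2 * real n)" using assms(1) by (auto simp: field_simps)
  finally show ?thesis .
qed

end

lemma (in lie_hermitian) lck_splitI:
  assumes "lck_splitting br J n a f1 f2 \<mu> lam B"
  shows "lck_split br J n a f1 f2 \<mu> lam B"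
  using assms unfolding lck_splitting_def
  by (intro lck_split.intro lck_split_axioms.intro lie_hermitian_axioms) (elim conjE, assumption)+

context lie_hermitian
begin

lemma LCK_rank_one_iff:
  assumes "n \<ge> 1" "DIM('g) = 2 * n + 2" "almost_abelian br" "dim (derived br) = 1"
  shows "LCK br J \<longleftrightarrow> DIM('g) = 4 \<and> (\<exists>f1 f2 u v \<mu> m k. lck_rank_one_frame br J f1 f2 u v \<mu> m k)"
proof
  assume "LCK br J"
  then obtain \<theta> where lee: "lee_form br J \<theta>" unfolding LCK_def by blast
  obtain f1 f2 a where frame: "adapted_frame br J f1 f2 a" and dim_a: "dim a = 2 * n"
    using almost_abelian_adapted_frame[OF assms(3,2)] by blast
  have "\<theta> f1 = 0"
    using adapted_frame.dim_derived_ge_2[OF frame lee] dim_a assms(1,4) by fastforce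
  then have "dim a = 2"
    using adapted_frame.lee_f1_eq_0_dim_a_le_2[OF frame lee] dim_a assms(1) by simp
  then show "DIM('g) = 4 \<and> (\<exists>f1 f2 u v \<mu> m k. lck_rank_one_frame br J f1 f2 u v \<mu> m k)"
    using adapted_frame.lck_rank_one_frame_of_lee[OF frame lee \<open>\<theta> f1 = 0\<close>] dim_a assms(2)
    by (intro conjI) (simp, blast)
next
  assume "DIM('g) = 4 \<and> (\<exists>f1 f2 u v \<mu> m k. lck_rank_one_frame br J f1 f2 u v \<mu> m k)"
  then show "LCK br J"
    using rank_one_frame.lee_form[OF rank_one_frameI]
    unfolding LCK_def by blast
qed

lemma LCK_rank_ge_2_iff:
  assumes "n \<ge> 1" "DIM('g) = 2 * n + 2" "almost_abelian br" "dim (derived br) \<ge> 2"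
  shows "LCK br J \<longleftrightarrow> (\<exists>a f1 f2 \<mu> lam B. lck_splitting br J n a f1 f2 \<mu> lam B)"
proof
  assume "LCK br J"
  then obtain \<theta> where lee: "lee_form br J \<theta>" unfolding LCK_def by blast
  obtain f1 f2 a where frame: "adapted_frame br J f1 f2 a" and dim_a: "dim a = 2 * n"
    using almost_abelian_adapted_frame[OF assms(3,2)] by blast
  have "\<theta> f1 \<noteq> 0"
  proof
    assume "\<theta> f1 = 0"
    then have "dim a = 2"
      using adapted_frame.lee_f1_eq_0_dim_a_le_2[OF frame lee] dim_a assms(1) by simp
    then have "dim (derived br) \<le> 1"
      using adapted_frame.lee_f1_eq_0_ad_f1_a[OF frame lee \<open>\<theta> f1 = 0\<close>]
        adapted_frame.dim_derived_le_1[OF frame] by blast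
    with assms(4) show False by simp
  qed
  then show "\<exists>a f1 f2 \<mu> lam B. lck_splitting br J n a f1 f2 \<mu> lam B"
    using adapted_frame.lck_splitting_of_lee[OF frame lee _ dim_a] by blast
next
  assume "\<exists>a f1 f2 \<mu> lam B. lck_splitting br J n a f1 f2 \<mu> lam B"
  then show "LCK br J"
    using lck_split.lee_form[OF lck_splitI] unfolding LCK_def by blast
qed

end

theorem theorem3p3:
  fixes br :: "'g::euclidean_space \<Rightarrow> 'g \<Rightarrow> 'g" and J :: "'g \<Rightarrow> 'g" and n :: nat
  assumes "n \<ge> 1" and "DIM('g) = 2 * n + 2"
    and "lie_algebra br" and "almost_abelian br" and "hermitian br J"
  shows
   "(dim (derived br) = 1 \<longrightarrow>
      (LCK br J \<longleftrightarrow>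
        DIM('g) = 4 \<and>
        (\<exists>f1 f2 u v \<mu> m k.
           norm f1 = 1 \<and> norm f2 = 1 \<and> norm u = 1 \<and> norm v = 1 \<and>
           inner f1 f2 = 0 \<and> inner f1 u = 0 \<and> inner f1 v = 0 \<and>
           inner f2 u = 0 \<and> inner f2 v = 0 \<and> inner u v = 0 \<and>
           span {f1, f2, u, v} = UNIV \<and> J f1 = f2 \<and> J u = v \<and>
           br f1 f2 = \<mu> *\<^sub>R f2 + m *\<^sub>R u + k *\<^sub>R v \<and>
           br f1 u = 0 \<and> br f1 v = 0 \<and> br f2 u = 0 \<and> br f2 v = 0 \<and> br u v = 0 \<and>
           (m, k) \<noteq> (0, 0))) \<and>
      (\<forall>f1 f2 u v \<mu> m k.
           norm f1 = 1 \<and> norm f2 = 1 \<and> norm u = 1 \<and> norm v = 1 \<and>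
           inner f1 f2 = 0 \<and> inner f1 u = 0 \<and> inner f1 v = 0 \<and>
           inner f2 u = 0 \<and> inner f2 v = 0 \<and> inner u v = 0 \<and>
           span {f1, f2, u, v} = UNIV \<and> J f1 = f2 \<and> J u = v \<and>
           br f1 f2 = \<mu> *\<^sub>R f2 + m *\<^sub>R u + k *\<^sub>R v \<and>
           br f1 u = 0 \<and> br f1 v = 0 \<and> br f2 u = 0 \<and> br f2 v = 0 \<and> br u v = 0 \<and>
           (m, k) \<noteq> (0, 0) \<longrightarrow>
         (\<mu> = 0 \<longrightarrow> lie_isomorphic br h3_times_R) \<and>
         (\<mu> \<noteq> 0 \<longrightarrow> lie_isomorphic br aff_times_R2)))
  \<and>
   (dim (derived br) \<ge> 2 \<longrightarrow>
      (LCK br J \<longleftrightarrow>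
        (\<exists>a f1 f2 \<mu> lam B.
           subspace a \<and> dim a = 2 * n \<and>
           (\<forall>x\<in>a. \<forall>y. br y x \<in> a) \<and> (\<forall>x\<in>a. \<forall>y\<in>a. br x y = 0) \<and>
           J ` a \<subseteq> a \<and>
           f1 \<in> {x. \<forall>y\<in>a. inner x y = 0} \<and> f2 \<in> {x. \<forall>y\<in>a. inner x y = 0} \<and>
           norm f1 = 1 \<and> norm f2 = 1 \<and> inner f1 f2 = 0 \<and>
           span {f1, f2} = {x. \<forall>y\<in>a. inner x y = 0} \<and>
           br f1 f2 = \<mu> *\<^sub>R f2 \<and> f2 = J f1 \<and>
           (\<forall>x\<in>a. br f2 x = 0) \<and>
           linear B \<and> B ` a \<subseteq> a \<and>
           (\<forall>x\<in>a. \<forall>y\<in>a. inner (B x) y = - inner x (B y)) \<and>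
           (\<forall>x\<in>a. B (J x) = J (B x)) \<and>
           (\<forall>x\<in>a. br f1 x = lam *\<^sub>R x + B x) \<and>
           lam \<noteq> 0)) \<and>
      (\<forall>a f1 f2 \<mu> lam B.
           subspace a \<and> dim a = 2 * n \<and>
           (\<forall>x\<in>a. \<forall>y. br y x \<in> a) \<and> (\<forall>x\<in>a. \<forall>y\<in>a. br x y = 0) \<and>
           J ` a \<subseteq> a \<and>
           f1 \<in> {x. \<forall>y\<in>a. inner x y = 0} \<and> f2 \<in> {x. \<forall>y\<in>a. inner x y = 0} \<and>
           norm f1 = 1 \<and> norm f2 = 1 \<and> inner f1 f2 = 0 \<and>
           span {f1, f2} = {x. \<forall>y\<in>a. inner x y = 0} \<and>
           br f1 f2 = \<mu> *\<^sub>R f2 \<and> f2 = J f1 \<and>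
           (\<forall>x\<in>a. br f2 x = 0) \<and>
           linear B \<and> B ` a \<subseteq> a \<and>
           (\<forall>x\<in>a. \<forall>y\<in>a. inner (B x) y = - inner x (B y)) \<and>
           (\<forall>x\<in>a. B (J x) = J (B x)) \<and>
           (\<forall>x\<in>a. br f1 x = lam *\<^sub>R x + B x) \<and>
           lam \<noteq> 0 \<longrightarrow>
         (\<forall>\<theta>. lee_form br J \<theta> \<longrightarrow> \<theta> = (\<lambda>x. - 2 * lam * inner f1 x)) \<and>
         (unimodular br \<longleftrightarrow> lam = - \<mu> / (2 * real n))))"
proof -
  interpret lie_hermitian br J using assms(3,5) by unfold_locales
  show ?thesis
    unfolding lck_rank_one_frame_def[symmetric] lck_splitting_def[symmetric]
    using LCK_rank_one_iff[OF assms(1,2,4)] LCK_rank_ge_2_iff[OF assms(1,2,4)]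
      rank_one_frame.isomorphic_h3_times_R[OF rank_one_frameI]
      rank_one_frame.isomorphic_aff_times_R2[OF rank_one_frameI]
      lck_split.lee_form_unique[OF lck_splitI assms(1)] lck_split.unimodular_iff[OF lck_splitI assms(1,2)]
    by (intro conjI impI allI) simp_all
qed

end
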